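(* Let $\mathbb P$ be an LTF, $n\ge1$, $P\in\mathbf{LC}_n(\mathbb P)$, and let $D\subseteq\mathbb P\times_{E_0}\mathbb P$ be open dense in $\mathbb P\times_{E_0}\mathbb P$. Then there is $Q\in\mathbf{LC}_n(\mathbb P)$ with $Q\subseteq_n P$ such that $\langle Q(\to s),Q(\to t)\rangle\in D$ whenever $s,t\in 2^n$ and $s(n-1)\ne t(n-1)$.
   Context: Notation. $2^{<\omega}$ is the set of finite binary strings, $\Lambda$ the empty string, $\mathrm{lh}(s)$ the length of $s$, $2^n$ the set of strings of length $n$, $s\subseteq t$ means $t$ extends $s$, $s^\frown t$ concatenation. For strings $s,t$ with $\mathrm{lh}(s)\le\mathrm{lh}(t)$, $s\cdot t$ is the string of length $\mathrm{lh}(t)$ with $(s\cdot t)(k)=t(k)+s(k)\bmod 2$ for $k<\mathrm{lh}(s)$ and $(s\cdot t)(k)=t(k)$ otherwise; if $\mathrm{lh}(s)>\mathrm{lh}(t)$ then $s\cdot t=(s\restriction\mathrm{lh}(t))\cdot t$. For $T\subseteq 2^{<\omega}$, $s\cdot T=\{s\cdot t:t\in T\}$. For a tree $T$ and $s\in T$, $T\upharpoonright s=\{t\in T:s\subseteq t\lor t\subseteq s\}$. A perfect tree is a nonempty tree $T\subseteq 2^{<\omega}$ with no endpoints and no isolated branches; its stem $\mathrm{stem}(T)$ is the largest $s\in T$ with $T=T\upharpoonright s$. A perfect tree $T$ is large, written $T\in\mathbf{LT}$, if there are nonempty strings $q^i_n$ ($n<\omega$, $i=0,1$) with $\mathrm{lh}(q^0_n)=\mathrm{lh}(q^1_n)\ge1$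 and $q^i_n(0)=i$, such that $T$ consists exactly of all initial segments of strings $r^\frown q^{i(0)}_0{}^\frown\cdots{}^\frown q^{i(n)}_n$, where $r=\mathrm{stem}(T)$, $n<\omega$, $i(0),\dots,i(n)\in\{0,1\}$. Its splitting levels are $\mathrm{spl}_0(T)=\mathrm{lh}(r)$, $\mathrm{spl}_{n+1}(T)=\mathrm{spl}_n(T)+\mathrm{lh}(q^0_n)$. For $T\in\mathbf{LT}$ and $i\in\{0,1\}$, $T(\to i)=T\upharpoonright(\mathrm{stem}(T)^\frown i)$; for $s\in 2^n$ with $n\ge1$, $T(\to s)=(\cdots((T(\to s(0)))(\to s(1)))\cdots)(\to s(n-1))$, and $T(\to\Lambda)=T$. For $S,T\in\mathbf{LT}$ and $n<\omega$, $S\subseteq_n T$ means $S\subseteq T$ and $\mathrm{spl}_k(S)=\mathrm{spl}_k(T)$ for all $k<n$. A large-tree forcing notion (LTF) is a set $\mathbb P\subseteq\mathbf{LT}$ such that $T\upharpoonright u\in\mathbb P$ whenever $u\in T\in\mathbb P$, and $s\cdot T\in\mathbb P$ whenever $T\in\mathbb P$ and $s\in 2^{<\omega}$; it is ordered by inclusion (smaller trees are stronger conditions). A tree $T\in\mathbf{LT}$ is an $n$-collage over $\mathbb P$ if $T(\to s)\in\mathbb P$ for all $s\in 2^n$; $\mathbf{LC}_n(\mathbb P)$ denotes the set of such trees. The conditional product $\mathbb P\times_{E_0}\mathbb P$ is the set of pairs $\langle T,T'\rangle$ of trees $T,T'\in\mathbb P$ such that $T'=s\cdot T$ for some $s\in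 2^{<\omega}$, ordered componentwise: $\langle S,S'\rangle\le\langle T,T'\rangle$ iff $S\subseteq T$ and $S'\subseteq T'$. *)

theory Defs
  imports Main "HOL-Library.Sublist"
begin

text \<open>Finite binary strings are bool lists (False = 0, True = 1);
  s \<subseteq> t (t extends s) is prefix s t; trees are sets of bool lists.\<close>

definition sdot :: "bool list \<Rightarrow> bool list \<Rightarrow> bool list" where
  "sdot s t = map (\<lambda>k. if k < length s then (t ! k \<noteq> s ! k) else t ! k) [0..<length t]"

definition sdot_tree :: "bool list \<Rightarrow> bool list set \<Rightarrow> bool list set" where
  "sdot_tree s T = sdot s ` T"

definition restr :: "bool list set \<Rightarrow> bool list \<Rightarrow> bool list set" where
  "restr T s = {t \<in> T. prefix s t \<or> prefix t s}"

definition perfect_tree :: "bool list set \<Rightarrow> bool" where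
  "perfect_tree T \<longleftrightarrow> T \<noteq> {}
     \<and> (\<forall>u\<in>T. \<forall>v. prefix v u \<longrightarrow> v \<in> T)
     \<and> (\<forall>u\<in>T. \<exists>b. u @ [b] \<in> T)
     \<and> (\<forall>u\<in>T. \<exists>v. prefix u v \<and> v @ [False] \<in> T \<and> v @ [True] \<in> T)"

definition stem :: "bool list set \<Rightarrow> bool list" where
  "stem T = (THE s. s \<in> T \<and> T = restr T s \<and> (\<forall>u\<in>T. T = restr T u \<longrightarrow> prefix u s))"

text \<open>q witnesses largeness of T: q j i is the string q^i_j.\<close>
definition LT_witness :: "bool list set \<Rightarrow> (nat \<Rightarrow> bool \<Rightarrow> bool list) \<Rightarrow> bool" where
  "LT_witness T q \<longleftrightarrow>
     (\<forall>j i. length (q j False) = length (q j True) \<and> length (q j i) \<ge> 1 \<and> q j i ! 0 = i)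
     \<and> T = {u. \<exists>n f. prefix u (stem T @ concat (map (\<lambda>j. q j (f j)) [0..<Suc n]))}"

definition LT :: "bool list set set" where
  "LT = {T. perfect_tree T \<and> (\<exists>q. LT_witness T q)}"

definition spl :: "bool list set \<Rightarrow> nat \<Rightarrow> nat" where
  "spl T k = length (stem T) + (\<Sum>j<k. length ((SOME q. LT_witness T q) j False))"

definition to1 :: "bool list set \<Rightarrow> bool \<Rightarrow> bool list set" where
  "to1 T i = restr T (stem T @ [i])"

definition to :: "bool list set \<Rightarrow> bool list \<Rightarrow> bool list set" where
  "to T s = foldl to1 T s"

definition subseteq_n :: "bool list set \<Rightarrow> nat \<Rightarrow> bool list set \<Rightarrow> bool" where
  "subseteq_n S n T \<longleftrightarrow> S \<subseteq> T \<and> (\<forall>k<n. spl S k = spl T k)"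

definition LTF :: "bool list set set \<Rightarrow> bool" where
  "LTF P \<longleftrightarrow> P \<subseteq> LT
     \<and> (\<forall>T\<in>P. \<forall>u\<in>T. restr T u \<in> P)
     \<and> (\<forall>T\<in>P. \<forall>s. sdot_tree s T \<in> P)"

definition LC :: "nat \<Rightarrow> bool list set set \<Rightarrow> bool list set set" where
  "LC n P = {T \<in> LT. \<forall>s. length s = n \<longrightarrow> to T s \<in> P}"

definition cprod :: "bool list set set \<Rightarrow> (bool list set \<times> bool list set) set" where
  "cprod P = {(T, T'). T \<in> P \<and> T' \<in> P \<and> (\<exists>s. T' = sdot_tree s T)}"

definition cle :: "bool list set \<times> bool list set \<Rightarrow> bool list set \<times> bool list set \<Rightarrow> bool" where
  "cle p q \<longleftrightarrow> fst p \<subseteq> fst q \<and> snd p \<subseteq> snd q"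

definition open_dense_in :: "(bool list set \<times> bool list set) set \<Rightarrow> (bool list set \<times> bool list set) set \<Rightarrow> bool" where
  "open_dense_in D X \<longleftrightarrow> D \<subseteq> X
     \<and> (\<forall>p\<in>D. \<forall>q\<in>X. cle q p \<longrightarrow> q \<in> D)
     \<and> (\<forall>p\<in>X. \<exists>q\<in>D. cle q p)"

end

theory Submission
  imports Defs
begin

text \<open>
  A large tree is determined by its stem r and its sequence of splitting segments q, and its
  cone T(\<rightarrow>x) at a node x of level n is again a large tree, with stem r followed by the segments
  chosen by x and with the remaining segments of T. Hence any two cones of the same level are
  translates of each other. For a single pair s, t of level-n nodes with different last bits, density
  gives a pair (A, w\<cdot>A) \<in> D below the pair of cones of s and t; shrinking A to a cone of large
  level we may assume that A and w\<cdot>A have long stems and the same splitting segments. Grafting these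
  stems onto the (n-1)-st segment of T, for the respective last bit, yields a refinement whose cones
  at s and t are exactly A and w\<cdot>A, while all other level-n cones are translates of these two and
  hence still lie in the forcing. By openness of D, refinements preserve the pairs handled
  before, so finitely many such steps treat all pairs.
\<close>

lemma length_sdot [simp]: "length (sdot s t) = length t"
  by (simp add: sdot_def)

lemma nth_sdot: "i < length t \<Longrightarrow> sdot s t ! i = (if i < length s then t ! i \<noteq> s ! i else t ! i)"
  by (simp add: sdot_def)

lemma sdot_sdot [simp]: "sdot w (sdot w u) = u"
  by (rule nth_equalityI) (auto simp: nth_sdot)

lemma take_sdot: "take k (sdot w c) = sdot w (take k c)"
  by (rule nth_equalityI) (auto simp: nth_sdot)

lemma sdot_append: "length w \<le> length x \<Longrightarrow> sdot w (x @ y) = sdot w x @ y"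
  by (rule nth_equalityI) (auto simp: nth_sdot nth_append)

lemma sdot_sdot_swap: "length x = length y \<Longrightarrow> sdot (sdot y x) y = x"
  by (rule nth_equalityI) (auto simp: nth_sdot)

lemma prefix_iff_take: "prefix a c \<longleftrightarrow> length a \<le> length c \<and> take (length a) c = a"
  by (auto simp: prefix_def) (metis append_take_drop_id)

lemma prefix_sdot_iff: "prefix (sdot w u) c \<longleftrightarrow> prefix u (sdot w c)"
  unfolding prefix_iff_take by (metis length_sdot sdot_sdot take_sdot)

lemma mem_sdot_tree: "u \<in> sdot_tree w T \<longleftrightarrow> sdot w u \<in> T"
  unfolding sdot_tree_def by (metis image_iff sdot_sdot)

lemma prefix_nth: "prefix u x \<Longrightarrow> k < length u \<Longrightarrow> u ! k = x ! k"
  by (auto simp: prefix_def nth_append)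

lemma prefix_snoc_nth: "prefix u x \<Longrightarrow> length u < length x \<Longrightarrow> prefix (u @ [x ! length u]) x"
  unfolding prefix_iff_take by (auto simp: take_Suc_conv_app_nth)

section \<open>Large trees given by stem and splitting segments\<close>

definition branch :: "(nat \<Rightarrow> bool \<Rightarrow> bool list) \<Rightarrow> (nat \<Rightarrow> bool) \<Rightarrow> nat \<Rightarrow> bool list" where
  "branch q f N = concat (map (\<lambda>j. q j (f j)) [0..<N])"

definition lt_tree :: "bool list \<Rightarrow> (nat \<Rightarrow> bool \<Rightarrow> bool list) \<Rightarrow> bool list set" where
  "lt_tree r q = {u. \<exists>n f. prefix u (r @ branch q f (Suc n))}"

definition wf_segments :: "(nat \<Rightarrow> bool \<Rightarrow> bool list) \<Rightarrow> bool" where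
  "wf_segments q \<longleftrightarrow>
     (\<forall>j i. length (q j False) = length (q j True) \<and> length (q j i) \<ge> 1 \<and> q j i ! 0 = i)"

lemma LT_witness_iff: "LT_witness T q \<longleftrightarrow> wf_segments q \<and> T = lt_tree (stem T) q"
  unfolding LT_witness_def wf_segments_def lt_tree_def branch_def by (rule refl)

lemma branch_0 [simp]: "branch q f 0 = []"
  by (simp add: branch_def)

lemma branch_Suc: "branch q f (Suc N) = branch q f N @ q N (f N)"
  by (simp add: branch_def)

lemma branch_Suc_left: "branch q f (Suc N) = q 0 (f 0) @ branch (\<lambda>j. q (Suc j)) (\<lambda>j. f (Suc j)) N"
  by (induction N) (auto simp: branch_Suc)

lemma branch_add: "branch q f (n + m) = branch q f n @ branch (\<lambda>j. q (j + n)) (\<lambda>j. f (j + n)) m"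
  by (induction m) (auto simp: branch_Suc add.commute)

lemma branch_cong: "(\<And>j. j < N \<Longrightarrow> q j (f j) = q' j (g j)) \<Longrightarrow> branch q f N = branch q' g N"
  unfolding branch_def by (rule arg_cong[where f=concat]) auto

lemma prefix_branch_mono: "N \<le> M \<Longrightarrow> prefix (branch q f N) (branch q f M)"
  by (metis branch_add le_Suc_ex prefix_def)

lemma wf_segments_shift: "wf_segments q \<Longrightarrow> wf_segments (\<lambda>j. q (j + k))"
  unfolding wf_segments_def by blast

lemma length_segment: "wf_segments q \<Longrightarrow> length (q j i) = length (q j False)"
  unfolding wf_segments_def by (cases i) auto

lemma prefix_segment_head: "wf_segments q \<Longrightarrow> prefix [i] (q j i)"
proof -
  assume "wf_segments q"
  then have "length (q j i) \<ge> 1" "q j i ! 0 = i" unfolding wf_segments_def by blast+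
  then show ?thesis by (cases "q j i") auto
qed

lemma segment_head: "wf_segments q \<Longrightarrow> (q j i @ v) ! 0 = i"
  using prefix_segment_head[of q i j] by (auto simp: prefix_def)

lemma length_branch: "wf_segments q \<Longrightarrow> length (branch q f N) = (\<Sum>j<N. length (q j False))"
proof (induction N)
  case (Suc N)
  then show ?case using length_segment[of q N "f N"] by (simp add: branch_Suc)
qed simp

lemma length_branch_ge: "wf_segments q \<Longrightarrow> N \<le> length (branch q f N)"
proof (induction N)
  case (Suc N)
  have "length (q N (f N)) \<ge> 1" using Suc.prems unfolding wf_segments_def by blast
  then show ?case using Suc by (simp add: branch_Suc)
qed simp

lemma mem_lt_tree: "u \<in> lt_tree r q \<longleftrightarrow> (\<exists>n f. prefix u (r @ branch q f n))"
  unfolding lt_tree_def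
proof safe
  fix n f assume "prefix u (r @ branch q f n)"
  moreover have "prefix (r @ branch q f n) (r @ branch q f (Suc n))"
    by (simp add: prefix_branch_mono)
  ultimately show "\<exists>n f. prefix u (r @ branch q f (Suc n))" by (meson prefix_order.trans)
qed blast

lemma mem_lt_treeI: "prefix u (r @ branch q f n) \<Longrightarrow> u \<in> lt_tree r q"
  using mem_lt_tree by blast

lemma prefix_stem_mem_lt_tree: "prefix u r \<Longrightarrow> u \<in> lt_tree r q"
  by (rule mem_lt_treeI[of _ _ _ undefined 0]) simp

lemma lt_tree_prefix_closed: "u \<in> lt_tree r q \<Longrightarrow> prefix v u \<Longrightarrow> v \<in> lt_tree r q"
  by (metis mem_lt_tree prefix_order.trans)

lemma lt_tree_comparable_stem: "u \<in> lt_tree r q \<Longrightarrow> prefix u r \<or> prefix r u"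
  by (auto simp: mem_lt_tree prefix_append)

lemma lt_tree_stem_prefix: "u \<in> lt_tree r q \<Longrightarrow> length r \<le> length u \<Longrightarrow> prefix r u"
  using lt_tree_comparable_stem prefix_length_prefix by blast

lemma branch_snoc_mem_lt_tree: "wf_segments q \<Longrightarrow> (r @ branch q f N) @ [b] \<in> lt_tree r q"
proof -
  assume q: "wf_segments q"
  have "branch q (f(N:=b)) N = branch q f N" by (rule branch_cong) simp
  then have "r @ branch q (f(N:=b)) (Suc N) = (r @ branch q f N) @ q N b"
    by (simp add: branch_Suc)
  moreover have "prefix ((r @ branch q f N) @ [b]) ((r @ branch q f N) @ q N b)"
    using prefix_segment_head[OF q, of b N] by simp
  ultimately show ?thesis by (metis mem_lt_treeI)
qed

lemma perfect_lt_tree: "wf_segments q \<Longrightarrow> perfect_tree (lt_tree r q)"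
  unfolding perfect_tree_def
proof (intro conjI ballI allI impI)
  assume q: "wf_segments q"
  show "lt_tree r q \<noteq> {}" using prefix_stem_mem_lt_tree[of r r q] by auto
  show "v \<in> lt_tree r q" if "u \<in> lt_tree r q" "prefix v u" for u v
    using that by (rule lt_tree_prefix_closed)
  fix u assume "u \<in> lt_tree r q"
  then obtain n f where p: "prefix u (r @ branch q f n)" using mem_lt_tree by blast
  then show "\<exists>v. prefix u v \<and> v @ [False] \<in> lt_tree r q \<and> v @ [True] \<in> lt_tree r q"
    using branch_snoc_mem_lt_tree[OF q] by blast
  let ?x = "(r @ branch q f n) @ [True]"
  have "prefix u ?x" "length u < length ?x"
    using p prefix_length_le by (fastforce simp: prefix_append)+
  then have "prefix (u @ [?x ! length u]) ?x" by (rule prefix_snoc_nth)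
  then show "\<exists>b. u @ [b] \<in> lt_tree r q"
    using branch_snoc_mem_lt_tree[OF q] lt_tree_prefix_closed by blast
qed

lemma stem_lt_tree: "wf_segments q \<Longrightarrow> stem (lt_tree r q) = r"
proof -
  assume q: "wf_segments q"
  let ?T = "lt_tree r q"
  have rT: "r \<in> ?T" by (rule prefix_stem_mem_lt_tree) simp
  have rr: "?T = restr ?T r" unfolding restr_def using lt_tree_comparable_stem by blast
  have maxr: "prefix u r" if u: "u \<in> ?T" "?T = restr ?T u" for u
  proof (rule ccontr)
    assume nu: "\<not> prefix u r"
    then have "prefix r u" using lt_tree_comparable_stem u(1) by blast
    with nu have lu: "length r < length u"
      by (metis le_neq_implies_less prefix_length_le prefix_length_prefix prefix_order.refl)
    let ?b = "u ! length r"
    have "(r @ branch q (\<lambda>_. False) 0) @ [\<not> ?b] \<in> ?T" by (rule branch_snoc_mem_lt_tree[OF q])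
    then have "r @ [\<not> ?b] \<in> restr ?T u" using u(2) by simp
    then have "prefix u (r @ [\<not> ?b]) \<or> prefix (r @ [\<not> ?b]) u" unfolding restr_def by blast
    then show False
      using lu prefix_nth[of u "r @ [\<not> ?b]" "length r"] prefix_nth[of "r @ [\<not> ?b]" u "length r"]
      by auto
  qed
  show ?thesis unfolding stem_def
  proof (rule the_equality)
    show "r \<in> ?T \<and> ?T = restr ?T r \<and> (\<forall>u\<in>?T. ?T = restr ?T u \<longrightarrow> prefix u r)"
      using rT rr maxr by blast
    fix s assume "s \<in> ?T \<and> ?T = restr ?T s \<and> (\<forall>u\<in>?T. ?T = restr ?T u \<longrightarrow> prefix u s)"
    then have "prefix s r" "prefix r s" using maxr rT rr by blast+
    then show "s = r" by (rule prefix_order.antisym)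
  qed
qed

lemma lt_tree_in_LT: "wf_segments q \<Longrightarrow> lt_tree r q \<in> LT"
  unfolding LT_def using perfect_lt_tree LT_witness_iff stem_lt_tree by auto

lemma LT_obtain_segments:
  assumes "T \<in> LT"
  obtains q where "wf_segments q" "T = lt_tree (stem T) q"
  using assms unfolding LT_def LT_witness_iff by auto

lemma restr_lt_tree:
  assumes q: "wf_segments q"
  shows "restr (lt_tree r q) (r @ [i]) = lt_tree (r @ q 0 i) (\<lambda>j. q (Suc j))"
proof (intro set_eqI iffI)
  fix u assume "u \<in> restr (lt_tree r q) (r @ [i])"
  then have uT: "u \<in> lt_tree r q" and c: "prefix (r @ [i]) u \<or> prefix u (r @ [i])"
    unfolding restr_def by auto
  obtain n f where p: "prefix u (r @ branch q f n)" using uT mem_lt_tree by blast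
  from c show "u \<in> lt_tree (r @ q 0 i) (\<lambda>j. q (Suc j))"
  proof
    assume "prefix u (r @ [i])"
    moreover have "prefix (r @ [i]) (r @ q 0 i)" using prefix_segment_head[OF q] by simp
    ultimately show ?thesis using prefix_stem_mem_lt_tree prefix_order.trans by blast
  next
    assume pr: "prefix (r @ [i]) u"
    then have lu: "length r < length u" using prefix_length_le by fastforce
    then obtain n' where n: "n = Suc n'"
      using p prefix_length_le[of u r] by (cases n) auto
    have e: "r @ branch q f n = r @ q 0 (f 0) @ branch (\<lambda>j. q (Suc j)) (\<lambda>j. f (Suc j)) n'"
      using n branch_Suc_left by simp
    have "i = u ! length r" using prefix_nth[OF pr, of "length r"] by simp
    also have "\<dots> = (r @ branch q f n) ! length r" using p lu prefix_nth by blast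
    also have "\<dots> = f 0" using e segment_head[OF q] by (simp add: nth_append)
    finally have "prefix u ((r @ q 0 i) @ branch (\<lambda>j. q (Suc j)) (\<lambda>j. f (Suc j)) n')"
      using p e by simp
    then show ?thesis by (rule mem_lt_treeI)
  qed
next
  fix u assume "u \<in> lt_tree (r @ q 0 i) (\<lambda>j. q (Suc j))"
  then obtain n g where p: "prefix u ((r @ q 0 i) @ branch (\<lambda>j. q (Suc j)) g n)"
    using mem_lt_tree by blast
  have "r @ branch q (case_nat i g) (Suc n) = (r @ q 0 i) @ branch (\<lambda>j. q (Suc j)) g n"
    by (simp add: branch_Suc_left)
  then have uT: "u \<in> lt_tree r q" using p mem_lt_treeI by metis
  have "prefix (r @ [i]) ((r @ q 0 i) @ branch (\<lambda>j. q (Suc j)) g n)"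
    using prefix_segment_head[OF q, of i 0] by (metis append_assoc prefix_append same_prefix_prefix)
  then have "prefix (r @ [i]) u \<or> prefix u (r @ [i])" using p prefix_same_cases by blast
  then show "u \<in> restr (lt_tree r q) (r @ [i])" unfolding restr_def using uT by blast
qed

lemma to_lt_tree:
  "wf_segments q \<Longrightarrow>
     to (lt_tree r q) s = lt_tree (r @ branch q ((!) s) (length s)) (\<lambda>j. q (j + length s))"
proof (induction s arbitrary: r q)
  case Nil
  then show ?case by (simp add: to_def)
next
  case (Cons i s)
  have "to (lt_tree r q) (i # s) = to (lt_tree (r @ q 0 i) (\<lambda>j. q (Suc j))) s"
    by (simp add: to_def to1_def stem_lt_tree restr_lt_tree Cons.prems)
  also have "\<dots> = lt_tree ((r @ q 0 i) @ branch (\<lambda>j. q (Suc j)) ((!) s) (length s))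
                     (\<lambda>j. q (Suc (j + length s)))"
    using Cons.IH wf_segments_shift[OF Cons.prems, of 1] by simp
  also have "\<dots> = lt_tree (r @ branch q ((!) (i # s)) (length (i # s))) (\<lambda>j. q (j + length (i # s)))"
    by (simp add: branch_Suc_left)
  finally show ?case .
qed

text \<open>In lt_tree r q the node r @ q 0 i splits, so it cannot lie strictly inside a segment of q'.\<close>
lemma lt_tree_subset_first_segment:
  assumes q: "wf_segments q" and q': "wf_segments q'" and sub: "lt_tree r q \<subseteq> lt_tree r q'"
  shows "length (q' 0 i) \<le> length (q 0 i) \<and> (\<exists>v. prefix (q 0 i) (q' 0 i @ v))"
proof -
  have fork: "\<exists>v. prefix (q 0 i @ [b]) (q' 0 i @ v)" for b
  proof -
    have "(r @ branch q (\<lambda>_. i) 1) @ [b] \<in> lt_tree r q" by (rule branch_snoc_mem_lt_tree[OF q])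
    then have "r @ q 0 i @ [b] \<in> lt_tree r q'" using sub by (simp add: branch_Suc subset_iff)
    then obtain n g where p: "prefix (r @ q 0 i @ [b]) (r @ branch q' g n)"
      using mem_lt_tree by blast
    then obtain n' where n: "n = Suc n'"
      using prefix_length_le[of "r @ q 0 i @ [b]" r] by (cases n) auto
    have p2: "prefix (q 0 i @ [b]) (q' 0 (g 0) @ branch (\<lambda>j. q' (Suc j)) (\<lambda>j. g (Suc j)) n')"
      using p n branch_Suc_left by simp
    have "i = (q' 0 (g 0) @ branch (\<lambda>j. q' (Suc j)) (\<lambda>j. g (Suc j)) n') ! 0"
      using prefix_nth[OF p2, of 0] segment_head[OF q] by simp
    then have "g 0 = i" using segment_head[OF q'] by simp
    then show ?thesis using p2 by blast
  qed
  obtain v1 where v1: "prefix (q 0 i @ [True]) (q' 0 i @ v1)" using fork by blast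
  obtain v2 where v2: "prefix (q 0 i @ [False]) (q' 0 i @ v2)" using fork by blast
  have "length (q' 0 i) \<le> length (q 0 i)"
  proof (rule ccontr)
    assume "\<not> ?thesis"
    then show False
      using prefix_nth[OF v1, of "length (q 0 i)"] prefix_nth[OF v2, of "length (q 0 i)"]
      by (simp add: nth_append)
  qed
  moreover have "prefix (q 0 i) (q' 0 i @ v1)" using v1 by (metis prefix_order.trans prefix_append prefix_order.refl)
  ultimately show ?thesis by blast
qed

lemma lt_tree_first_segment_unique:
  assumes q: "wf_segments q" and q': "wf_segments q'" and eq: "lt_tree r q = lt_tree r q'"
  shows "q 0 i = q' 0 i"
proof -
  obtain v where "length (q' 0 i) \<le> length (q 0 i)" "prefix (q 0 i) (q' 0 i @ v)"
    using lt_tree_subset_first_segment[OF q q', of r i] eq by auto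
  moreover have "length (q 0 i) \<le> length (q' 0 i)"
    using lt_tree_subset_first_segment[OF q' q, of r i] eq by auto
  ultimately show ?thesis unfolding prefix_iff_take by simp
qed

lemma lt_tree_segments_unique:
  "wf_segments q \<Longrightarrow> wf_segments q' \<Longrightarrow> lt_tree r q = lt_tree r q' \<Longrightarrow> q = q'"
proof (rule ext)
  fix j
  show "wf_segments q \<Longrightarrow> wf_segments q' \<Longrightarrow> lt_tree r q = lt_tree r q' \<Longrightarrow> q j = q' j"
  proof (induction j arbitrary: r q q')
    case 0
    then show ?case using lt_tree_first_segment_unique by blast
  next
    case (Suc j)
    have "q 0 False = q' 0 False" by (rule lt_tree_first_segment_unique[OF Suc.prems])
    then have "lt_tree (r @ q 0 False) (\<lambda>j. q (Suc j)) = lt_tree (r @ q 0 False) (\<lambda>j. q' (Suc j))"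
      using restr_lt_tree[OF Suc.prems(1), of r False] restr_lt_tree[OF Suc.prems(2), of r False]
        Suc.prems(3) by simp
    then show ?case
      using Suc.IH wf_segments_shift[OF Suc.prems(1), of 1] wf_segments_shift[OF Suc.prems(2), of 1]
      by simp
  qed
qed

lemma spl_lt_tree: "wf_segments q \<Longrightarrow> spl (lt_tree r q) k = length r + (\<Sum>j<k. length (q j False))"
proof -
  assume q: "wf_segments q"
  have "(SOME q'. LT_witness (lt_tree r q) q') = q"
  proof (rule some_equality)
    show "LT_witness (lt_tree r q) q" using q by (simp add: LT_witness_iff stem_lt_tree)
    fix q' assume "LT_witness (lt_tree r q) q'"
    then show "q' = q" using lt_tree_segments_unique q by (metis LT_witness_iff stem_lt_tree)
  qed
  then show ?thesis unfolding spl_def by (simp add: stem_lt_tree q)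
qed

lemma sdot_tree_lt_tree: "length w \<le> length x \<Longrightarrow> sdot_tree w (lt_tree x q) = lt_tree (sdot w x) q"
  by (auto simp: mem_sdot_tree mem_lt_tree prefix_sdot_iff sdot_append)

lemma lt_tree_translate:
  "length x = length y \<Longrightarrow> lt_tree (x @ v) q = sdot_tree (sdot y x) (lt_tree (y @ v) q)"
  by (simp add: sdot_tree_lt_tree sdot_append sdot_sdot_swap)

section \<open>Cones and the forcing\<close>

lemma to_subset: "to T s \<subseteq> T"
proof (induction s arbitrary: T)
  case (Cons i s)
  have "to T (i # s) \<subseteq> to1 T i" using Cons.IH by (simp add: to_def)
  also have "\<dots> \<subseteq> T" unfolding to1_def restr_def by blast
  finally show ?case .
qed (simp add: to_def)

lemma LTF_to1_mem:
  assumes P: "LTF P" and T: "T \<in> P"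
  shows "to1 T i \<in> P"
proof -
  have "T \<in> LT" using P T unfolding LTF_def by blast
  then obtain q where q: "wf_segments q" and eq: "T = lt_tree (stem T) q"
    by (rule LT_obtain_segments)
  have "stem T @ [i] \<in> T"
    using branch_snoc_mem_lt_tree[OF q, of "stem T" "\<lambda>_. False" 0 i] eq by simp
  then show ?thesis using P T unfolding to1_def LTF_def by blast
qed

lemma LTF_to_mem: "LTF P \<Longrightarrow> T \<in> P \<Longrightarrow> to T s \<in> P"
  by (induction s arbitrary: T) (simp_all add: to_def LTF_to1_mem)

lemma LT_cones_translate:
  assumes "T \<in> LT" and "length y = length x"
  shows "\<exists>w. to T y = sdot_tree w (to T x)"
proof -
  obtain q where q: "wf_segments q" and T: "T = lt_tree (stem T) q"
    using assms(1) by (rule LT_obtain_segments)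
  let ?p = "\<lambda>z. stem T @ branch q ((!) z) (length z)"
  have "length (?p y) = length (?p x)" by (simp add: length_branch[OF q] assms(2))
  then show ?thesis
    using to_lt_tree[OF q] lt_tree_translate[of "?p y" "?p x" "[]"] T assms(2) by (metis append_Nil2)
qed

lemma LC_cones_cprod:
  assumes "Q \<in> LC n P" and "length x = n" and "length y = n"
  shows "(to Q x, to Q y) \<in> cprod P"
  using assms LT_cones_translate[of Q y x] unfolding LC_def cprod_def by auto

lemma lt_tree_covered_by_cones:
  assumes q: "wf_segments q" and u: "u \<in> lt_tree r q"
  obtains s where "length s = n" "u \<in> to (lt_tree r q) s"
proof -
  obtain N f where p: "prefix u (r @ branch q f N)" using u mem_lt_tree by blast
  have "prefix (branch q f N) (branch q f (n + N))" by (rule prefix_branch_mono) simp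
  then have "prefix u (r @ branch q f (n + N))" using p by (metis prefix_order.trans same_prefix_prefix)
  moreover have "branch q f n = branch q ((!) (map f [0..<n])) n" by (rule branch_cong) simp
  ultimately have "u \<in> lt_tree (r @ branch q ((!) (map f [0..<n])) n) (\<lambda>j. q (j + n))"
    by (auto simp: branch_add intro: mem_lt_treeI)
  then show ?thesis using that[of "map f [0..<n]"] to_lt_tree[OF q] by simp
qed

lemma LT_subset_if_cones_subset:
  assumes "Q' \<in> LT" and "\<forall>x. length x = n \<longrightarrow> to Q' x \<subseteq> to Q x"
  shows "Q' \<subseteq> Q"
proof
  fix u assume "u \<in> Q'"
  moreover obtain q where "wf_segments q" "Q' = lt_tree (stem Q') q"
    using assms(1) by (rule LT_obtain_segments)
  ultimately obtain x where "length x = n" "u \<in> to Q' x"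
    by (metis lt_tree_covered_by_cones)
  then show "u \<in> Q" using assms(2) to_subset by blast
qed

section \<open>Grafting new segments at a splitting level\<close>

definition graft ::
    "(nat \<Rightarrow> bool \<Rightarrow> bool list) \<Rightarrow> nat \<Rightarrow> (bool \<Rightarrow> bool list) \<Rightarrow> (nat \<Rightarrow> bool \<Rightarrow> bool list)
      \<Rightarrow> nat \<Rightarrow> bool \<Rightarrow> bool list" where
  "graft q n e q' j i =
     (if j < n - 1 then q j i else if j = n - 1 then q j i @ e i else q' (j - n) i)"

lemma wf_segments_graft:
  assumes q: "wf_segments q" and q': "wf_segments q'" and e: "length (e False) = length (e True)"
  shows "wf_segments (graft q n e q')"
  unfolding wf_segments_def
proof (intro allI)
  fix j i
  have "length (q j False) = length (q j True)" "1 \<le> length (q j i)" "q j i ! 0 = i"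
    using q unfolding wf_segments_def by blast+
  then show "length (graft q n e q' j False) = length (graft q n e q' j True)
      \<and> 1 \<le> length (graft q n e q' j i) \<and> graft q n e q' j i ! 0 = i"
    using q' e unfolding graft_def wf_segments_def by (auto simp: nth_append)
qed

lemma to_lt_tree_graft:
  assumes q: "wf_segments q" and q': "wf_segments q'" and e: "length (e False) = length (e True)"
    and n: "n \<ge> 1" and x: "length x = n"
  shows "to (lt_tree r (graft q n e q')) x = lt_tree (r @ branch q ((!) x) n @ e (x ! (n - 1))) q'"
proof -
  have "branch (graft q n e q') ((!) x) (n - 1) = branch q ((!) x) (n - 1)"
    by (rule branch_cong) (simp add: graft_def)
  then have "branch (graft q n e q') ((!) x) n = branch q ((!) x) n @ e (x ! (n - 1))"
    using branch_Suc[of _ "(!) x" "n - 1"] n by (simp add: graft_def)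
  moreover have "(\<lambda>j. graft q n e q' (j + n)) = q'" using n by (intro ext) (auto simp: graft_def)
  ultimately show ?thesis using to_lt_tree[OF wf_segments_graft[OF q q' e]] x by simp
qed

lemma spl_lt_tree_graft:
  assumes "wf_segments q" and "wf_segments q'" and "length (e False) = length (e True)"
    and "k < n"
  shows "spl (lt_tree r (graft q n e q')) k = spl (lt_tree r q) k"
proof -
  have "(\<Sum>j<k. length (graft q n e q' j False)) = (\<Sum>j<k. length (q j False))"
    using assms(4) by (intro sum.cong) (auto simp: graft_def)
  then show ?thesis using assms spl_lt_tree wf_segments_graft by metis
qed

lemma graft_cones_common_translate:
  assumes q: "wf_segments q" and q': "wf_segments q'" and e: "length (e False) = length (e True)"
    and n: "n \<ge> 1" and x: "length x = n" and y: "length y = n" and xy: "x ! (n - 1) = y ! (n - 1)"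
  obtains w where "to (lt_tree r (graft q n e q')) x = sdot_tree w (to (lt_tree r (graft q n e q')) y)"
    and "to (lt_tree r q) x = sdot_tree w (to (lt_tree r q) y)"
proof
  let ?p = "\<lambda>z. r @ branch q ((!) z) n"
  let ?w = "sdot (?p y) (?p x)"
  have l: "length (?p x) = length (?p y)" by (simp add: length_branch[OF q])
  show "to (lt_tree r (graft q n e q')) x = sdot_tree ?w (to (lt_tree r (graft q n e q')) y)"
    using to_lt_tree_graft[OF q q' e n] x y xy lt_tree_translate[OF l] by simp
  show "to (lt_tree r q) x = sdot_tree ?w (to (lt_tree r q) y)"
    using to_lt_tree[OF q] x y lt_tree_translate[OF l, of "[]"] by simp
qed

text \<open>All level-n cones of the graft are translates of the two cones checked in the hypothesis.\<close>
lemma graft_LC_refinement: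
  fixes r :: "bool list" and q qC :: "nat \<Rightarrow> bool \<Rightarrow> bool list" and e :: "bool \<Rightarrow> bool list"
    and n :: nat
  defines "Q' \<equiv> lt_tree r (graft q n e qC)" and "Q \<equiv> lt_tree r q"
  assumes P: "LTF P" and n: "n \<ge> 1" and q: "wf_segments q" and qC: "wf_segments qC"
    and e: "length (e False) = length (e True)"
    and cones: "\<And>i. \<exists>y. length y = n \<and> y ! (n - 1) = i \<and> to Q' y \<in> P \<and> to Q' y \<subseteq> to Q y"
  shows "Q' \<in> LC n P" "subseteq_n Q' n Q" "\<forall>x. length x = n \<longrightarrow> to Q' x \<subseteq> to Q x"
proof -
  have cone: "to Q' x \<in> P \<and> to Q' x \<subseteq> to Q x" if x: "length x = n" for x
  proof -
    obtain y where y: "length y = n" "x ! (n - 1) = y ! (n - 1)" "to Q' y \<in> P" "to Q' y \<subseteq> to Q y"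
      using cones[of "x ! (n - 1)"] by metis
    obtain w where "to Q' x = sdot_tree w (to Q' y)" "to Q x = sdot_tree w (to Q y)"
      using graft_cones_common_translate[OF q qC e n x y(1,2)] unfolding Q'_def Q_def by blast
    then show ?thesis using y(3,4) P unfolding LTF_def sdot_tree_def by auto
  qed
  have Q'LT: "Q' \<in> LT" unfolding Q'_def by (rule lt_tree_in_LT[OF wf_segments_graft[OF q qC e]])
  then show "Q' \<in> LC n P" using cone unfolding LC_def by blast
  show "subseteq_n Q' n Q"
    unfolding subseteq_n_def using LT_subset_if_cones_subset[OF Q'LT] cone
      spl_lt_tree_graft[OF q qC e] unfolding Q'_def Q_def by blast
  show "\<forall>x. length x = n \<longrightarrow> to Q' x \<subseteq> to Q x" using cone by blast
qed

section \<open>Meeting the dense set\<close>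

lemma open_dense_in_below:
  "open_dense_in D X \<Longrightarrow> p \<in> D \<Longrightarrow> p' \<in> X \<Longrightarrow> cle p' p \<Longrightarrow> p' \<in> D"
  unfolding open_dense_in_def by blast

text \<open>The pair given by density is shrunk to a cone of high level, whose stem is longer than both m
  and the translating word.\<close>
lemma open_dense_cprod_long_stems:
  assumes P: "LTF P" and D: "open_dense_in D (cprod P)" and S: "(S, S') \<in> cprod P"
  obtains a b q where "wf_segments q" "length b = length a" "m \<le> length a"
    "lt_tree a q \<subseteq> S" "lt_tree b q \<subseteq> S'" "(lt_tree a q, lt_tree b q) \<in> D"
proof -
  obtain A B where AB: "(A, B) \<in> D" and "cle (A, B) (S, S')"
    using D S unfolding open_dense_in_def by fastforce
  then have AS: "A \<subseteq> S" and BS: "B \<subseteq> S'" unfolding cle_def by auto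
  from AB D obtain w where AP: "A \<in> P" and Bw: "B = sdot_tree w A"
    unfolding open_dense_in_def cprod_def by blast
  have "A \<in> LT" using AP P unfolding LTF_def by blast
  then obtain qA where qA: "wf_segments qA" and A: "A = lt_tree (stem A) qA"
    by (rule LT_obtain_segments)
  define M where "M = length w + m"
  define a where "a = stem A @ branch qA ((!) (replicate M False)) M"
  define q where "q = (\<lambda>j. qA (j + M))"
  have q: "wf_segments q" unfolding q_def by (rule wf_segments_shift[OF qA])
  have A': "to A (replicate M False) = lt_tree a q"
    using to_lt_tree[OF qA, of "stem A"] A unfolding a_def q_def by (metis length_replicate)
  have la: "M \<le> length a" unfolding a_def using length_branch_ge[OF qA] by (metis le_add2 length_append order.trans)
  have B': "sdot_tree w (lt_tree a q) = lt_tree (sdot w a) q"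
    by (rule sdot_tree_lt_tree) (use la M_def in simp)
  have A'A: "lt_tree a q \<subseteq> A" using to_subset A' by metis
  have B'B: "lt_tree (sdot w a) q \<subseteq> B"
    using A'A B' Bw unfolding sdot_tree_def by (metis image_mono)
  have A'P: "lt_tree a q \<in> P" using LTF_to_mem[OF P AP] A' by metis
  have "(lt_tree a q, lt_tree (sdot w a) q) \<in> cprod P"
    using A'P P B' unfolding LTF_def cprod_def by (metis (mono_tags, lifting) case_prodI mem_Collect_eq)
  moreover have "cle (lt_tree a q, lt_tree (sdot w a) q) (A, B)"
    using A'A B'B unfolding cle_def by simp
  ultimately have "(lt_tree a q, lt_tree (sdot w a) q) \<in> D" by (rule open_dense_in_below[OF D AB])
  moreover have "m \<le> length a" using la M_def by simp
  moreover have "lt_tree a q \<subseteq> S" using A'A AS by blast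
  moreover have "lt_tree (sdot w a) q \<subseteq> S'" using B'B BS by blast
  ultimately show ?thesis using that[where a=a and b="sdot w a", OF q] by simp
qed

section \<open>The fusion step\<close>

lemma subseteq_n_refl: "subseteq_n T n T"
  by (simp add: subseteq_n_def)

lemma subseteq_n_trans: "subseteq_n R n S \<Longrightarrow> subseteq_n S n T \<Longrightarrow> subseteq_n R n T"
  by (auto simp: subseteq_n_def)

lemma LC_refine_for_pair:
  assumes P: "LTF P" and n: "n \<ge> 1" and Q: "Q \<in> LC n P" and D: "open_dense_in D (cprod P)"
    and s: "length s = n" and t: "length t = n" and st: "s ! (n - 1) \<noteq> t ! (n - 1)"
  obtains Q' where "Q' \<in> LC n P" "subseteq_n Q' n Q" "\<forall>x. length x = n \<longrightarrow> to Q' x \<subseteq> to Q x"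
    "(to Q' s, to Q' t) \<in> D"
proof -
  define r where "r = stem Q"
  have "Q \<in> LT" using Q unfolding LC_def by blast
  then obtain q where q: "wf_segments q" and eQ: "Q = lt_tree r q"
    unfolding r_def by (rule LT_obtain_segments)
  define p where "p x = r @ branch q ((!) x) n" for x
  have toQ: "to Q x = lt_tree (p x) (\<lambda>j. q (j + n))" if "length x = n" for x
    using to_lt_tree[OF q, of r x] that eQ unfolding p_def by simp
  have lp: "length (p x) = length (p s)" for x by (simp add: p_def length_branch[OF q])
  obtain a b qC where qC: "wf_segments qC" and lab: "length b = length a"
    and la: "length (p s) \<le> length a" and aQ: "lt_tree a qC \<subseteq> to Q s"
    and bQ: "lt_tree b qC \<subseteq> to Q t" and abD: "(lt_tree a qC, lt_tree b qC) \<in> D"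
    by (rule open_dense_cprod_long_stems[OF P D LC_cones_cprod[OF Q s t], where m="length (p s)"])
  have "a \<in> lt_tree (p s) (\<lambda>j. q (j + n))"
    using aQ toQ[OF s] prefix_stem_mem_lt_tree[of a a qC] by blast
  then have "prefix (p s) a" using la by (rule lt_tree_stem_prefix)
  then obtain ea where ea: "a = p s @ ea" by (rule prefixE)
  have "b \<in> lt_tree (p t) (\<lambda>j. q (j + n))"
    using bQ toQ[OF t] prefix_stem_mem_lt_tree[of b b qC] by blast
  then have "prefix (p t) b" using la lab lp[of t] by (intro lt_tree_stem_prefix) simp_all
  then obtain eb where eb: "b = p t @ eb" by (rule prefixE)
  define e where "e i = (if i = s ! (n - 1) then ea else eb)" for i
  have le: "length (e False) = length (e True)" using ea eb lab lp[of t] by (simp add: e_def)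
  define Q' where "Q' = lt_tree r (graft q n e qC)"
  have toQ': "to Q' x = lt_tree (p x @ e (x ! (n - 1))) qC" if "length x = n" for x
    using to_lt_tree_graft[OF q qC le n that] unfolding Q'_def p_def by simp
  have Q's: "to Q' s = lt_tree a qC" using toQ'[OF s] ea by (simp add: e_def)
  have Q't: "to Q' t = lt_tree b qC" using toQ'[OF t] eb st by (simp add: e_def)
  have "to Q' s \<in> P" "to Q' t \<in> P"
    using abD D Q's Q't unfolding open_dense_in_def cprod_def by auto
  have "\<exists>y. length y = n \<and> y ! (n - 1) = i \<and> to Q' y \<in> P \<and> to Q' y \<subseteq> to Q y" for i
  proof (cases "i = s ! (n - 1)")
    case True
    then show ?thesis using s aQ Q's \<open>to Q' s \<in> P\<close> by (auto intro!: exI[of _ s])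
  next
    case False
    then have "i = t ! (n - 1)" using st by auto
    then show ?thesis using t bQ Q't \<open>to Q' t \<in> P\<close> by (auto intro!: exI[of _ t])
  qed
  then have "Q' \<in> LC n P" "subseteq_n Q' n Q" "\<forall>x. length x = n \<longrightarrow> to Q' x \<subseteq> to Q x"
    using graft_LC_refinement[OF P n q qC le] unfolding Q'_def eQ by blast+
  moreover have "(to Q' s, to Q' t) \<in> D" using abD Q's Q't by simp
  ultimately show ?thesis by (rule that)
qed

lemma LC_refine_for_pairs:
  assumes P: "LTF P" and n: "n \<ge> 1" and Q: "Q \<in> LC n P" and D: "open_dense_in D (cprod P)"
    and "finite S" and "\<forall>(s, t)\<in>S. length s = n \<and> length t = n \<and> s ! (n - 1) \<noteq> t ! (n - 1)"
  shows "\<exists>Q'\<in>LC n P. subseteq_n Q' n Q \<and> (\<forall>(s, t)\<in>S. (to Q' s, to Q' t) \<in> D)"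
  using assms(5,6)
proof (induction S rule: finite_induct)
  case empty
  show ?case using Q subseteq_n_refl by blast
next
  case (insert st S)
  obtain s t where st: "st = (s, t)" by fastforce
  obtain Q1 where Q1: "Q1 \<in> LC n P" "subseteq_n Q1 n Q" "\<forall>(s, t)\<in>S. (to Q1 s, to Q1 t) \<in> D"
    using insert by auto
  obtain Q2 where Q2: "Q2 \<in> LC n P" "subseteq_n Q2 n Q1" "\<forall>x. length x = n \<longrightarrow> to Q2 x \<subseteq> to Q1 x"
    "(to Q2 s, to Q2 t) \<in> D"
    using LC_refine_for_pair[OF P n Q1(1) D] insert.prems st by auto
  have "(to Q2 s', to Q2 t') \<in> D" if "(s', t') \<in> S" for s' t'
  proof (rule open_dense_in_below[OF D])
    show "(to Q1 s', to Q1 t') \<in> D" using Q1(3) that by blast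
    have "length s' = n" "length t' = n" using insert.prems that by auto
    then show "(to Q2 s', to Q2 t') \<in> cprod P" "cle (to Q2 s', to Q2 t') (to Q1 s', to Q1 t')"
      using LC_cones_cprod[OF Q2(1)] Q2(3) unfolding cle_def by auto
  qed
  then show ?case using Q2(1,4) subseteq_n_trans[OF Q2(2) Q1(2)] st by auto
qed

theorem lemma5p2:
  assumes "LTF P" and "n \<ge> 1" and "T \<in> LC n P"
    and "open_dense_in D (cprod P)"
  shows "\<exists>Q \<in> LC n P. subseteq_n Q n T \<and>
           (\<forall>s t. length s = n \<and> length t = n \<and> s ! (n - 1) \<noteq> t ! (n - 1)
                  \<longrightarrow> (to Q s, to Q t) \<in> D)"
proof -
  let ?S = "{(s :: bool list, t). length s = n \<and> length t = n \<and> s ! (n - 1) \<noteq> t ! (n - 1)}"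
  have fin: "finite {s :: bool list. length s = n}"
    using finite_lists_length_eq[of "UNIV :: bool set" n] by simp
  have "finite ?S" by (rule finite_subset[OF _ finite_cartesian_product[OF fin fin]]) auto
  have "\<exists>Q\<in>LC n P. subseteq_n Q n T \<and> (\<forall>(s, t)\<in>?S. (to Q s, to Q t) \<in> D)"
    by (rule LC_refine_for_pairs[OF assms \<open>finite ?S\<close>]) auto
  then show ?thesis by fast
qed

end
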